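(* Let $q\ge 1$ and $n\ge 0$ be integers, let $a_1,\dots,a_n\in\mathbb{Z}_q$ be reduced residues (i.e. $\gcd(a_i,q)=1$ for all $i$), and let $P\subseteq\mathbb{Z}_q$ with $|P|=k$. Then the number of the $2^n$ choices $(\varepsilon_1,\dots,\varepsilon_n)\in\{0,1\}^n$ for which $\sum_{i=1}^n\varepsilon_i a_i \in P$ is at most $$\sum_{\substack{j\in\mathbb{Z}\\ (n-k)/2\le j<(n+k)/2}}\binom{n}{j}_q .$$ Moreover, this bound is best possible: for all such $q,n,k$ there exist reduced residues $a_1,\dots,a_n$ and a set $P\subseteq\mathbb{Z}_q$ with $|P|=k$ for which equality holds.
   Context: $\mathbb{Z}_q$ denotes the additive group of integers modulo $q$. For an integer $s$, the mod $q$ binomial coefficient is $\binom{n}{s}_q=|\{A\subseteq\{1,\dots,n\}: |A|\equiv s \pmod q\}|=\sum_{j\equiv s \ (\mathrm{mod}\ q),\,0\le j\le n}\binom{n}{j}$. The sum in the claim is the sum of the $k$ "middle" mod $q$ binomial coefficients in $n$. *)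

theory Defs
  imports "HOL-Library.FuncSet" "HOL-Number_Theory.Cong"
begin

definition binom_mod :: "nat \<Rightarrow> int \<Rightarrow> nat \<Rightarrow> nat" where
  "binom_mod n s q = card {A. A \<subseteq> {1..n} \<and> [int (card A) = s] (mod int q)}"

definition middle_sum :: "nat \<Rightarrow> nat \<Rightarrow> nat \<Rightarrow> nat" where
  "middle_sum n k q = (\<Sum>j\<in>{j::int. int n - int k \<le> 2 * j \<and> 2 * j < int n + int k}. binom_mod n j q)"

text \<open>Number of choices (eps_1,...,eps_n) in {0,1}^n with sum eps_i a_i in P (mod q);
  residues mod q are represented by their representatives in {0..<q}.\<close>
definition hits :: "nat \<Rightarrow> nat \<Rightarrow> (nat \<Rightarrow> int) \<Rightarrow> int set \<Rightarrow> nat" where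
  "hits q n a P = card {e \<in> {1..n} \<rightarrow>\<^sub>E {0::nat, 1}.
      (\<Sum>i=1..n. int (e i) * a i) mod int q \<in> P}"

end

theory Submission
  imports Defs
begin

text \<open>
  Let \<open>N\<^sub>n(x)\<close> count the subsets of \<open>{1..n}\<close> whose \<open>a\<close>-sum is congruent to \<open>x\<close>
  modulo \<open>q\<close>. Adjoining \<open>b = a\<^sub>n\<^sub>+\<^sub>1\<close> gives \<open>N\<^sub>n\<^sub>+\<^sub>1(x) = N\<^sub>n(x) + N\<^sub>n(x - b)\<close>, so the count
  for \<open>P\<close> at stage \<open>n + 1\<close> is the count for \<open>P \<union> (P - b)\<close> plus the count for
  \<open>P \<inter> (P - b)\<close> at stage \<open>n\<close>. These sets have sizes \<open>k + t\<close> and \<open>k - t\<close>, and \<open>t \<ge> 1\<close>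
  unless \<open>P\<close> is empty or all of \<open>\<int>\<^sub>q\<close>, because \<open>b\<close> is a unit. The sum \<open>M\<^sub>n(k)\<close> of
  the \<open>k\<close> middle mod \<open>q\<close> binomial coefficients obeys the same recursion
  \<open>M\<^sub>n\<^sub>+\<^sub>1(k) = M\<^sub>n(k + 1) + M\<^sub>n(k - 1)\<close> and is concave in \<open>k\<close> on \<open>[0, q]\<close>, hence
  \<open>M\<^sub>n(k + t) + M\<^sub>n(k - t) \<le> M\<^sub>n\<^sub>+\<^sub>1(k)\<close>, and induction on \<open>n\<close> gives the bound. Equality
  holds for \<open>a\<^sub>i = 1\<close> and \<open>P\<close> the residues of the middle window, where the count is
  the bound by definition.
\<close>

definition subset_count :: "nat \<Rightarrow> nat \<Rightarrow> (nat \<Rightarrow> int) \<Rightarrow> int \<Rightarrow> nat" where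
  "subset_count q n a x = card {A. A \<subseteq> {1..n} \<and> [(\<Sum>i\<in>A. a i) = x] (mod int q)}"

lemma subset_count_mod [simp]: "subset_count q n a (x mod int q) = subset_count q n a x"
  by (simp add: subset_count_def cong_def)

lemma card_subsets_insert:
  assumes "finite S" and "x \<notin> S"
  shows "card {A. A \<subseteq> insert x S \<and> Q A}
           = card {A. A \<subseteq> S \<and> Q A} + card {B. B \<subseteq> S \<and> Q (insert x B)}"
proof -
  let ?X = "{A. A \<subseteq> S \<and> Q A}" and ?Y = "{B. B \<subseteq> S \<and> Q (insert x B)}"
  have "{A. A \<subseteq> insert x S \<and> Q A} = {A \<in> Pow (insert x S). Q A}"
    by auto
  also have "\<dots> = ?X \<union> insert x ` ?Y"
    unfolding Pow_insert by blast
  finally have split: "{A. A \<subseteq> insert x S \<and> Q A} = ?X \<union> insert x ` ?Y" .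
  have "inj_on (insert x) ?Y" and "?X \<inter> insert x ` ?Y = {}"
    using assms(2) by (auto simp: inj_on_def)
  moreover have "finite ?X" "finite ?Y"
    using assms(1) by auto
  ultimately show ?thesis
    unfolding split by (simp add: card_Un_disjoint card_image)
qed

lemma subset_count_Suc:
  "subset_count q (Suc n) a x = subset_count q n a x + subset_count q n a (x - a (Suc n))"
proof -
  have "[(\<Sum>i\<in>insert (Suc n) B. a i) = x] (mod int q) \<longleftrightarrow> [(\<Sum>i\<in>B. a i) = x - a (Suc n)] (mod int q)"
    if "B \<subseteq> {1..n}" for B
  proof -
    have "Suc n \<notin> B" "finite B" using that finite_subset by auto
    then show ?thesis by (simp add: cong_iff_dvd_diff algebra_simps)
  qed
  moreover have "{1..Suc n} = insert (Suc n) {1..n}"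
    by auto
  ultimately show ?thesis
    unfolding subset_count_def by (simp add: card_subsets_insert cong: conj_cong)
qed

lemma sum_subset_count:
  assumes "finite J" and "inj_on (\<lambda>x. x mod int q) J"
  shows "(\<Sum>x\<in>J. subset_count q n a x)
           = card {A. A \<subseteq> {1..n} \<and> (\<exists>x\<in>J. [(\<Sum>i\<in>A. a i) = x] (mod int q))}"
proof -
  let ?S = "\<lambda>x. {A. A \<subseteq> {1..n} \<and> [(\<Sum>i\<in>A. a i) = x] (mod int q)}"
  have "\<forall>x\<in>J. \<forall>y\<in>J. x \<noteq> y \<longrightarrow> ?S x \<inter> ?S y = {}"
    using assms(2) by (auto simp: inj_on_def cong_def)
  moreover have "finite (?S x)" for x by (auto intro: finite_subset[of _ "Pow {1..n}"])
  moreover have "{A. A \<subseteq> {1..n} \<and> (\<exists>x\<in>J. [(\<Sum>i\<in>A. a i) = x] (mod int q))} = (\<Union>x\<in>J. ?S x)"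
    by blast
  ultimately show ?thesis
    unfolding subset_count_def using assms(1) by (simp add: card_UN_disjoint)
qed

lemma sum_subset_count_le:
  assumes "finite J" and "inj_on (\<lambda>x. x mod int q) J"
  shows "(\<Sum>x\<in>J. subset_count q n a x) \<le> 2 ^ n"
proof -
  have "(\<Sum>x\<in>J. subset_count q n a x) \<le> card (Pow {1..n})"
    unfolding sum_subset_count[OF assms] by (rule card_mono) auto
  then show ?thesis by (simp add: card_Pow)
qed

lemma bij_betw_support_PiE:
  "bij_betw (\<lambda>e. {i\<in>I. e i = 1}) (I \<rightarrow>\<^sub>E {0::nat, 1}) (Pow I)"
  by (rule bij_betw_byWitness[where f' = "\<lambda>A. restrict (\<lambda>i. if i \<in> A then 1 else 0) I"])
     (auto simp: PiE_def Pi_def extensional_def fun_eq_iff)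

lemma hits_eq_card:
  "hits q n a P = card {A. A \<subseteq> {1..n} \<and> (\<Sum>i\<in>A. a i) mod int q \<in> P}"
proof -
  have "(\<Sum>i=1..n. int (e i) * a i) = (\<Sum>i\<in>{i\<in>{1..n}. e i = 1}. a i)"
    if "e \<in> {1..n} \<rightarrow>\<^sub>E {0, 1}" for e
  proof -
    have "(\<Sum>i=1..n. int (e i) * a i) = (\<Sum>i=1..n. if e i = 1 then a i else 0)"
      using that by (intro sum.cong) (auto simp: PiE_def Pi_def)
    then show ?thesis by (simp add: sum.If_cases Int_def conj_assoc)
  qed
  then have "bij_betw (\<lambda>e. {i\<in>{1..n}. e i = 1})
      {e \<in> {1..n} \<rightarrow>\<^sub>E {0, 1}. (\<Sum>i=1..n. int (e i) * a i) mod int q \<in> P}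
      {A \<in> Pow {1..n}. (\<Sum>i\<in>A. a i) mod int q \<in> P}"
    by (intro bij_betw_Collect[OF bij_betw_support_PiE]) simp
  then show ?thesis
    unfolding hits_def by (simp add: bij_betw_same_card)
qed

lemma inj_on_mod_residues: "P \<subseteq> {0..<int q} \<Longrightarrow> inj_on (\<lambda>x. x mod int q) P"
  by (rule inj_onI) (metis atLeastLessThan_iff mod_pos_pos_trivial subsetD)

lemma hits_eq_sum_subset_count:
  assumes "P \<subseteq> {0..<int q}"
  shows "hits q n a P = (\<Sum>x\<in>P. subset_count q n a x)"
proof -
  have reduced: "x mod int q = x" if "x \<in> P" for x
    using that assms by auto
  have "finite P" using assms finite_subset by blast
  moreover note inj_on_mod_residues[OF assms]
  moreover have "(s mod int q \<in> P) \<longleftrightarrow> (\<exists>x\<in>P. [s = x] (mod int q))" for s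
    using reduced by (metis cong_def)
  ultimately show ?thesis
    unfolding hits_eq_card by (simp add: sum_subset_count)
qed

lemma binom_mod_eq_subset_count: "binom_mod n j q = subset_count q n (\<lambda>_. 1) j"
  by (simp add: binom_mod_def subset_count_def)

lemma binom_mod_Suc: "binom_mod (Suc n) j q = binom_mod n j q + binom_mod n (j - 1) q"
  unfolding binom_mod_eq_subset_count by (rule subset_count_Suc)

lemma inj_on_mod_interval:
  assumes "k \<le> q"
  shows "inj_on (\<lambda>j. j mod int q) {c..<c + int k}"
proof (rule inj_onI)
  fix i j assume i: "i \<in> {c..<c + int k}" and j: "j \<in> {c..<c + int k}"
    and "i mod int q = j mod int q"
  then have "[i - c = j - c] (mod int q)"
    by (simp add: cong_def[symmetric] cong_diff)
  with i j show "i = j"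
    using assms cong_less_imp_eq_int[of "i - c" "int q" "j - c"] by simp
qed

definition middle_window :: "nat \<Rightarrow> nat \<Rightarrow> int set" where
  "middle_window n k = {j. int n - int k \<le> 2 * j \<and> 2 * j < int n + int k}"

lemma middle_sum_eq_sum_window: "middle_sum n k q = (\<Sum>j\<in>middle_window n k. binom_mod n j q)"
  by (simp add: middle_sum_def middle_window_def)

lemma middle_window_eq_interval:
  "middle_window n k = {(int n - int k + 1) div 2 ..< (int n - int k + 1) div 2 + int k}"
  unfolding middle_window_def by (auto; presburger)

lemma finite_middle_window: "finite (middle_window n k)"
  and card_middle_window: "card (middle_window n k) = k"
  unfolding middle_window_eq_interval by auto

lemma inj_on_mod_middle_window: "k \<le> q \<Longrightarrow> inj_on (\<lambda>j. j mod int q) (middle_window n k)"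
  unfolding middle_window_eq_interval by (rule inj_on_mod_interval)

lemma middle_sum_n_0: "middle_sum n 0 q = 0"
  by (simp add: middle_sum_eq_sum_window middle_window_eq_interval)

lemma middle_sum_Suc_Suc:
  "middle_sum (Suc n) (Suc k) q = middle_sum n (Suc (Suc k)) q + middle_sum n k q"
proof -
  let ?W = "middle_window (Suc n) (Suc k)"
  let ?V = "(\<lambda>j. j - 1) ` ?W"
  have "?V = {j. j + 1 \<in> ?W}"
    by force
  then have V: "?V = {j. int n - int k - 2 \<le> 2 * j \<and> 2 * j < int n + int k}"
    by (auto simp: middle_window_def)
  have "middle_sum (Suc n) (Suc k) q = (\<Sum>j\<in>?W. binom_mod n j q) + (\<Sum>j\<in>?W. binom_mod n (j - 1) q)"
    unfolding middle_sum_eq_sum_window binom_mod_Suc by (rule sum.distrib)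
  also have "(\<Sum>j\<in>?W. binom_mod n (j - 1) q) = (\<Sum>j\<in>?V. binom_mod n j q)"
    by (simp add: sum.reindex inj_on_def)
  also have "(\<Sum>j\<in>?W. binom_mod n j q) + (\<Sum>j\<in>?V. binom_mod n j q)
      = (\<Sum>j\<in>?W \<union> ?V. binom_mod n j q) + (\<Sum>j\<in>?W \<inter> ?V. binom_mod n j q)"
    by (rule sum.union_inter[symmetric]) (simp_all add: finite_middle_window)
  also have "?W \<union> ?V = middle_window n (Suc (Suc k))"
    unfolding V by (auto simp: middle_window_def)
  also have "?W \<inter> ?V = middle_window n k"
    unfolding V by (auto simp: middle_window_def)
  finally show ?thesis by (simp add: middle_sum_eq_sum_window)
qed

lemma middle_sum_eq_card:
  assumes "k \<le> q"
  shows "middle_sum n k q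
           = card {A. A \<subseteq> {1..n} \<and> (\<exists>j\<in>middle_window n k. [int (card A) = j] (mod int q))}"
  unfolding middle_sum_eq_sum_window binom_mod_eq_subset_count
  using sum_subset_count[OF finite_middle_window inj_on_mod_middle_window[OF assms]] by simp

lemma middle_sum_le_power: "k \<le> q \<Longrightarrow> middle_sum n k q \<le> 2 ^ n"
  unfolding middle_sum_eq_sum_window binom_mod_eq_subset_count
  by (rule sum_subset_count_le[OF finite_middle_window inj_on_mod_middle_window])

lemma middle_sum_n_q:
  assumes "1 \<le> q"
  shows "middle_sum n q q = 2 ^ n"
proof -
  define c where "c = (int n - int q + 1) div 2"
  have "\<exists>j\<in>middle_window n q. [s = j] (mod int q)" for s
  proof
    show "c + (s - c) mod int q \<in> middle_window n q"
      using assms by (simp add: middle_window_eq_interval c_def)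
    show "[s = c + (s - c) mod int q] (mod int q)"
      by (simp add: cong_def mod_add_right_eq)
  qed
  then have "middle_sum n q q = card (Pow {1..n})"
    unfolding middle_sum_eq_card[OF order_refl] by (simp add: Pow_def)
  then show ?thesis by (simp add: card_Pow)
qed

lemma middle_sum_0_k:
  assumes "1 \<le> k" and "k \<le> q"
  shows "middle_sum 0 k q = 1"
proof -
  have "0 \<in> middle_window 0 k"
    using assms by (simp add: middle_window_def)
  then have "{A. A \<subseteq> {1..0::nat} \<and> (\<exists>j\<in>middle_window 0 k. [int (card A) = j] (mod int q))} = {{}}"
    by (auto simp: subset_iff intro!: bexI[of _ 0])
  then show ?thesis
    by (simp add: middle_sum_eq_card[OF assms(2)])
qed

lemma concave_increments_antimono:
  fixes f :: "nat \<Rightarrow> 'a::ordered_ab_semigroup_add_imp_le"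
  assumes concave: "\<And>k. k + 2 \<le> m \<Longrightarrow> f k + f (k + 2) \<le> f (k + 1) + f (k + 1)"
    and "i \<le> j" and "j + 1 \<le> m"
  shows "f i + f (j + 1) \<le> f (i + 1) + f j"
  using assms(2,3)
proof (induction j rule: dec_induct)
  case base
  then show ?case by (simp add: add.commute)
next
  case (step j)
  then have "(f i + f (j + 2)) + (f (j + 1) + f j) \<le> (f (i + 1) + f (j + 1)) + (f (j + 1) + f j)"
    using add_mono[OF step.IH concave[of j]] by (simp add: ac_simps)
  then have "f i + f (j + 2) \<le> f (i + 1) + f (j + 1)"
    by (rule add_le_imp_le_right)
  then show ?case by (simp add: numeral_2_eq_2)
qed

lemma concave_spread:
  fixes f :: "nat \<Rightarrow> 'a::ordered_ab_semigroup_add_imp_le"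
  assumes concave: "\<And>k. k + 2 \<le> m \<Longrightarrow> f k + f (k + 2) \<le> f (k + 1) + f (k + 1)"
    and "1 \<le> t" and "t \<le> k" and "k + t \<le> m"
  shows "f (k - t) + f (k + t) \<le> f (k - 1) + f (k + 1)"
  using assms(2-4)
proof (induction t)
  case (Suc t)
  show ?case
  proof (cases "t = 0")
    case False
    have "f (k - Suc t) + f (k + t + 1) \<le> f (k - Suc t + 1) + f (k + t)"
      using Suc.prems by (intro concave_increments_antimono[OF concave]) auto
    also have "\<dots> \<le> f (k - 1) + f (k + 1)"
      using Suc False by (simp add: Suc_diff_Suc)
    finally show ?thesis by simp
  qed simp
qed simp

lemma middle_sum_concave:
  assumes "1 \<le> q" and "k + 2 \<le> q"
  shows "middle_sum n k q + middle_sum n (k + 2) q \<le> 2 * middle_sum n (k + 1) q"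
  using assms(2)
proof (induction n arbitrary: k)
  case 0
  then show ?case
    using middle_sum_le_power[of k q 0] middle_sum_0_k[of "k + 1" q] middle_sum_0_k[of "k + 2" q]
    by simp
next
  case (Suc n)
  txt \<open>Concavity at stage \<open>n\<close> turns the recursion into \<open>M\<^sub>n\<^sub>+\<^sub>1(j) \<le> 2 M\<^sub>n(j)\<close>, and
    the recursion at \<open>k + 1\<close> then yields concavity at stage \<open>n + 1\<close>.\<close>
  have double: "middle_sum (Suc n) j q \<le> 2 * middle_sum n j q" if j: "j \<le> q" for j
  proof -
    consider "j = 0" | "j = q" | "0 < j" "j < q"
      using j by linarith
    then show ?thesis
    proof cases
      case 3
      then obtain i where "j = Suc i" "i + 2 \<le> q"
        using gr0_implies_Suc by fastforce
      then show ?thesis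
        using Suc.IH[of i] by (simp add: middle_sum_Suc_Suc add.commute)
    qed (simp_all add: middle_sum_n_0 middle_sum_n_q[OF assms(1)])
  qed
  have "middle_sum (Suc n) k q + middle_sum (Suc n) (k + 2) q
      \<le> 2 * (middle_sum n (k + 2) q + middle_sum n k q)"
    using double[of k] double[of "k + 2"] Suc.prems by simp
  also have "\<dots> = 2 * middle_sum (Suc n) (k + 1) q"
    by (simp add: middle_sum_Suc_Suc)
  finally show ?case .
qed

lemma translation_closed_residues_eq_all:
  assumes "coprime b (int q)" and P: "P \<subseteq> {0..<int q}"
    and closed: "(\<lambda>x. (x - b) mod int q) ` P \<subseteq> P" and "x \<in> P"
  shows "P = {0..<int q}"
proof -
  have orbit: "(x - int m * b) mod int q \<in> P" for m :: nat
  proof (induction m)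
    case 0
    then show ?case using \<open>x \<in> P\<close> P by auto
  next
    case (Suc m)
    then have "((x - int m * b) mod int q - b) mod int q \<in> P"
      using closed by blast
    then show ?case by (simp add: mod_diff_left_eq algebra_simps)
  qed
  obtain u where u: "[b * u = 1] (mod int q)"
    using cong_solve_coprime_int[OF assms(1)] by blast
  have "y \<in> P" if y: "y \<in> {0..<int q}" for y
  proof -
    define m where "m = nat ((x - y) * u mod int q)"
    have "int m = (x - y) * u mod int q"
      using y by (simp add: m_def)
    then have "[int m * b = (x - y) * u * b] (mod int q)"
      by (simp add: cong_def mod_mult_left_eq)
    also have "(x - y) * u * b = (x - y) * (b * u)"
      by (simp add: ac_simps)
    also have "[(x - y) * (b * u) = (x - y) * 1] (mod int q)"
      using u by (rule cong_mult[OF cong_refl])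
    finally have "[x - int m * b = x - (x - y) * 1] (mod int q)"
      by (rule cong_diff[OF cong_refl])
    then have "(x - int m * b) mod int q = y"
      using y by (simp add: cong_def)
    then show ?thesis using orbit[of m] by simp
  qed
  then show ?thesis using P by blast
qed

lemma inj_on_translate_mod: "inj_on (\<lambda>x. (x - b) mod int q) {0..<int q}"
proof (rule inj_onI)
  fix x y assume x: "x \<in> {0..<int q}" and y: "y \<in> {0..<int q}"
    and "(x - b) mod int q = (y - b) mod int q"
  then have "[x - b = y - b] (mod int q)"
    by (unfold cong_def)
  then have "[x = y] (mod int q)"
    by (simp add: cong_iff_dvd_diff)
  with x y show "x = y"
    by (simp add: cong_def)
qed

lemma sum_subset_count_Suc:
  assumes "P \<subseteq> {0..<int q}"
  shows "(\<Sum>x\<in>P. subset_count q (Suc n) a x)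
           = (\<Sum>x\<in>P. subset_count q n a x)
             + (\<Sum>x\<in>(\<lambda>x. (x - a (Suc n)) mod int q) ` P. subset_count q n a x)"
proof -
  have "(\<Sum>x\<in>P. subset_count q n a (x - a (Suc n)))
      = (\<Sum>x\<in>P. subset_count q n a ((x - a (Suc n)) mod int q))"
    by simp
  also have "\<dots> = (\<Sum>x\<in>(\<lambda>x. (x - a (Suc n)) mod int q) ` P. subset_count q n a x)"
    using inj_on_subset[OF inj_on_translate_mod assms] by (simp add: sum.reindex)
  finally show ?thesis
    by (simp add: subset_count_Suc sum.distrib)
qed

lemma middle_sum_spread_le_Suc:
  assumes "1 \<le> q" and "1 \<le> t" and "t \<le> k" and "k + t \<le> q"
  shows "middle_sum n (k - t) q + middle_sum n (k + t) q \<le> middle_sum (Suc n) k q"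
proof -
  have "middle_sum n (k - t) q + middle_sum n (k + t) q \<le> middle_sum n (k - 1) q + middle_sum n (k + 1) q"
    using concave_spread[of q "\<lambda>k. middle_sum n k q", OF _ assms(2-4)] middle_sum_concave[OF assms(1)]
    by (simp add: mult_2)
  also have "\<dots> = middle_sum (Suc n) k q"
    using middle_sum_Suc_Suc[of n "k - 1" q] assms(2,3) by simp
  finally show ?thesis .
qed

lemma card_Un_Int_not_subset:
  assumes "finite A" and "finite B" and "card B = card A" and "\<not> B \<subseteq> A"
  obtains t where "1 \<le> t" and "t \<le> card A"
    and "card (A \<union> B) = card A + t" and "card (A \<inter> B) = card A - t"
proof -
  have "card A < card (A \<union> B)"
    using assms by (intro psubset_card_mono) auto
  moreover have "card (A \<union> B) + card (A \<inter> B) = card A + card A"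
    using card_Un_Int[OF assms(1,2)] assms(3) by simp
  ultimately show ?thesis
    by (intro that[of "card (A \<union> B) - card A"]) linarith+
qed

lemma sum_subset_count_0_le_middle_sum:
  assumes "P \<subseteq> {0..<int q}"
  shows "(\<Sum>x\<in>P. subset_count q 0 a x) \<le> middle_sum 0 (card P) q"
proof (cases "P = {}")
  case False
  have "(\<Sum>x\<in>P. subset_count q 0 a x) \<le> 1"
    using sum_subset_count_le[OF finite_subset[OF assms] inj_on_mod_residues[OF assms], where n = 0]
    by simp
  also have "1 = middle_sum 0 (card P) q"
    using False assms card_mono[OF _ assms]
    by (intro middle_sum_0_k[symmetric]) (auto simp: Suc_le_eq card_gt_0_iff finite_subset)
  finally show ?thesis .
qed (simp add: middle_sum_n_0)

lemma sum_subset_count_le_middle_sum: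
  assumes "1 \<le> q" and "\<forall>i\<in>{1..n}. coprime (a i) (int q)" and "P \<subseteq> {0..<int q}"
  shows "(\<Sum>x\<in>P. subset_count q n a x) \<le> middle_sum n (card P) q"
  using assms(2,3)
proof (induction n arbitrary: P)
  case 0
  then show ?case by (intro sum_subset_count_0_le_middle_sum) simp
next
  case (Suc n P)
  let ?P' = "(\<lambda>x. (x - a (Suc n)) mod int q) ` P"
  define k where "k = card P"
  have fin: "finite P" "finite ?P'" and P': "?P' \<subseteq> {0..<int q}"
    using Suc.prems(2) assms(1) by (auto intro: finite_subset)
  have card_P': "card ?P' = k"
    unfolding k_def using inj_on_subset[OF inj_on_translate_mod Suc.prems(2)] by (rule card_image)
  have IH: "(\<Sum>x\<in>Q. subset_count q n a x) \<le> middle_sum n (card Q) q" if "Q \<subseteq> {0..<int q}" for Q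
    using Suc.IH[OF _ that] Suc.prems(1) by simp
  show ?case
  proof (cases "?P' \<subseteq> P")
    case True
    then consider "P = {}" | "P = {0..<int q}"
      using translation_closed_residues_eq_all[OF _ Suc.prems(2)] Suc.prems(1) by fastforce
    then show ?thesis
    proof cases
      case 2
      have "(\<Sum>x\<in>P. subset_count q (Suc n) a x) \<le> 2 ^ Suc n"
        using sum_subset_count_le[OF fin(1) inj_on_mod_residues[OF Suc.prems(2)]] .
      then show ?thesis
        using 2 assms(1) by (simp add: middle_sum_n_q)
    qed (simp add: middle_sum_n_0)
  next
    case False
    then obtain t where t: "1 \<le> t" "t \<le> k"
      and card_Un: "card (P \<union> ?P') = k + t" and card_Int: "card (P \<inter> ?P') = k - t"
      using card_Un_Int_not_subset[OF fin card_P'[unfolded k_def] False] unfolding k_def by blast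
    have "k + t \<le> q"
      using card_mono[of "{0..<int q}" "P \<union> ?P'"] Suc.prems(2) P' card_Un by simp
    have "(\<Sum>x\<in>P. subset_count q (Suc n) a x)
        = (\<Sum>x\<in>P \<union> ?P'. subset_count q n a x) + (\<Sum>x\<in>P \<inter> ?P'. subset_count q n a x)"
      using sum_subset_count_Suc[OF Suc.prems(2)] sum.union_inter[OF fin, symmetric] by simp
    also have "\<dots> \<le> middle_sum n (k + t) q + middle_sum n (k - t) q"
      using IH[of "P \<union> ?P'"] IH[of "P \<inter> ?P'"] Suc.prems(2) P' card_Un card_Int
      by (intro add_mono) auto
    also have "\<dots> \<le> middle_sum (Suc n) k q"
      using middle_sum_spread_le_Suc[OF assms(1) t \<open>k + t \<le> q\<close>] by (simp add: add.commute)
    finally show ?thesis unfolding k_def .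
  qed
qed

lemma hits_middle_residues:
  assumes "1 \<le> q" and "k \<le> q"
  shows "hits q n (\<lambda>_. 1) ((\<lambda>j. j mod int q) ` middle_window n k) = middle_sum n k q"
proof -
  have "hits q n (\<lambda>_. 1) ((\<lambda>j. j mod int q) ` middle_window n k)
      = (\<Sum>x\<in>(\<lambda>j. j mod int q) ` middle_window n k. subset_count q n (\<lambda>_. 1) x)"
    using assms(1) by (intro hits_eq_sum_subset_count) auto
  also have "\<dots> = (\<Sum>j\<in>middle_window n k. binom_mod n j q)"
    using inj_on_mod_middle_window[OF assms(2)] by (simp add: sum.reindex binom_mod_eq_subset_count)
  finally show ?thesis
    by (simp add: middle_sum_eq_sum_window)
qed

theorem theorem1:
  fixes q n :: nat
  assumes "q \<ge> 1"
  shows "(\<forall>(a :: nat \<Rightarrow> int) (P :: int set).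
            (\<forall>i\<in>{1..n}. coprime (a i) (int q)) \<and> P \<subseteq> {0..<int q}
            \<longrightarrow> hits q n a P \<le> middle_sum n (card P) q)
       \<and> (\<forall>k \<le> q. \<exists>(a :: nat \<Rightarrow> int) (P :: int set).
            (\<forall>i\<in>{1..n}. coprime (a i) (int q)) \<and> P \<subseteq> {0..<int q} \<and> card P = k
            \<and> hits q n a P = middle_sum n k q)"
proof (intro conjI allI impI)
  fix a :: "nat \<Rightarrow> int" and P :: "int set"
  assume "(\<forall>i\<in>{1..n}. coprime (a i) (int q)) \<and> P \<subseteq> {0..<int q}"
  then show "hits q n a P \<le> middle_sum n (card P) q"
    using sum_subset_count_le_middle_sum[OF assms] hits_eq_sum_subset_count by simp
next
  fix k assume "k \<le> q"
  let ?P = "(\<lambda>j. j mod int q) ` middle_window n k"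
  have "?P \<subseteq> {0..<int q}" "card ?P = k"
    using assms inj_on_mod_middle_window[OF \<open>k \<le> q\<close>] by (auto simp: card_image card_middle_window)
  then show "\<exists>(a :: nat \<Rightarrow> int) P.
            (\<forall>i\<in>{1..n}. coprime (a i) (int q)) \<and> P \<subseteq> {0..<int q} \<and> card P = k
            \<and> hits q n a P = middle_sum n k q"
    using hits_middle_residues[OF assms \<open>k \<le> q\<close>] by (intro exI[of _ "\<lambda>_. 1"] exI[of _ ?P]) simp
qed

end
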